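(* Let $K$ be an $n$-dimensional oriented, well-centered, manifold-like simplicial complex with boundary subcomplex $\partial K$ and circumcentric dual cell complex, and let $1\le k\le n$. For every primal discrete form $\alpha\in\Omega_d^{k-1}(K)$ and every dual discrete form $\hat\beta=(\hat\beta_{\mathrm i},\hat\beta_{\mathrm b})\in\Omega_d^{n-k}(\star K)$, $$\langle \mathbf{d}\alpha\wedge\hat\beta_{\mathrm i},K\rangle+(-1)^{k-1}\langle \alpha\wedge(\mathbf{d}_{\mathrm i}\hat\beta_{\mathrm i}+\mathbf{d}_{\mathrm b}\hat\beta_{\mathrm b}),K\rangle=\langle \alpha|_{\partial K}\wedge\hat\beta_{\mathrm b},\partial K\rangle .$$
   Context: Setting. $K$ is an $n$-dimensional manifold-like simplicial complex (every simplex is a face of some $n$-simplex), oriented ($n$-simplices sharing an $(n-1)$-face are coherently oriented, lower-dimensional simplices are individually oriented) and well-centered (every simplex contains its circumcenter in its interior). $\partial K$ is the $(n-1)$-dimensional boundary subcomplex: the $(n-1)$-simplices that are faces of exactly one $n$-simplex, together with all their faces. For simplices $\sigma^{j-1}\prec\sigma^{j}$ (face relation) let $[\sigma^{j-1}:\sigma^{j}]\in\{\pm1\}$ be the coefficient of $\sigma^{j-1}$ in the simplicial boundary $\partial[v_0,\dots,v_j]=\sum_i(-1)^i[v_0,\dots,\widehat{v_i},\dots,v_j]$. Dual cells. Each simplex $\sigma^j\in K$ has a circumcentric interior dual $(n-j)$-cell $\star_{\mathrm i}\sigma^j$; each simplex $\tau^j\in\partial K$ has a boundary dual $(n-1-j)$-cell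 $\star_{\mathrm b}\tau^j$ (its circumcentric dual within $\partial K$), lying on the boundary of the dual complex. Discrete forms. $\Omega_d^j(K)$ (resp. $\Omega_d^j(\partial K)$) is the space of real-valued functions on the $j$-simplices of $K$ (resp. $\partial K$); $\Omega_d^m(\star_{\mathrm i}K)$ is the space of real functions on interior dual $m$-cells $\star_{\mathrm i}\sigma^{n-m}$; $\Omega_d^m(\partial(\star K))$ is the space of real functions on boundary dual $m$-cells $\star_{\mathrm b}\tau^{n-1-m}$, $\tau\in\partial K$; $\Omega_d^m(\star K)=\Omega_d^m(\star_{\mathrm i}K)\times\Omega_d^m(\partial(\star K))$, elements written $\hat\beta=(\hat\beta_{\mathrm i},\hat\beta_{\mathrm b})$. For primal $\alpha$, $\alpha|_{\partial K}$ is its restriction to simplices of $\partial K$. Derivatives. Primal: $(\mathbf d\alpha)(\sigma^{j})=\sum_{\sigma^{j-1}\prec\sigma^{j}}[\sigma^{j-1}:\sigma^{j}]\,\alpha(\sigma^{j-1})$. Dual: for $\hat\beta\in\Omega_d^{m}(\star K)$, $m\le n-1$, set $j=n-m$; then $\mathbf d_{\mathrm i}\hat\beta_{\mathrm i},\mathbf d_{\mathrm b}\hat\beta_{\mathrm b}\in\Omega_d^{m+1}(\star_{\mathrm i}K)$ are $(\mathbf d_{\mathrm i}\hat\beta_{\mathrm i})(\star_{\mathrm i}\sigma^{j-1})=(-1)^{j}\sum_{\sigma^{j}\succ\sigma^{j-1}}[\sigma^{j-1}:\sigma^{j}]\,\hat\beta_{\mathrm i}(\star_{\mathrm i}\sigma^{j})$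 and $(\mathbf d_{\mathrm b}\hat\beta_{\mathrm b})(\star_{\mathrm i}\sigma^{j-1})=(-1)^{j-1}\hat\beta_{\mathrm b}(\star_{\mathrm b}\sigma^{j-1})$ if $\sigma^{j-1}\in\partial K$, and $0$ otherwise. Primal-dual wedge pairings (extended bilinearly). For $\alpha\in\Omega_d^j(K)$, $\hat\beta\in\Omega_d^{n-j}(\star_{\mathrm i}K)$: $\langle\alpha\wedge\hat\beta,K\rangle=\sum_{\sigma^j\in K}\alpha(\sigma^j)\hat\beta(\star_{\mathrm i}\sigma^j)$ and $\langle\hat\beta\wedge\alpha,K\rangle=(-1)^{j(n-j)}\langle\alpha\wedge\hat\beta,K\rangle$. For $\alpha\in\Omega_d^j(\partial K)$, $\hat\gamma\in\Omega_d^{n-1-j}(\partial(\star K))$: $\langle\alpha\wedge\hat\gamma,\partial K\rangle=\sum_{\tau^j\in\partial K}\alpha(\tau^j)\hat\gamma(\star_{\mathrm b}\tau^j)$ and $\langle\hat\gamma\wedge\alpha,\partial K\rangle=(-1)^{j(n-1-j)}\langle\alpha\wedge\hat\gamma,\partial K\rangle$. *)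

theory Defs
  imports "HOL-Analysis.Analysis"
begin

text \<open>
A simplex is a finite nonempty set of vertices; its dimension is card - 1.
Vertices carry a linear order; an orientation of the simplices is encoded by
a sign function ori with ori s in {1,-1}, meaning that s is oriented as
ori s times the increasing ordering of its vertices.
Discrete forms (primal, interior dual, boundary dual) are real functions
indexed by simplices (dual cells are indexed by the simplices they are dual to).
\<close>

definition simplex_dim :: "'v set \<Rightarrow> nat" where
  "simplex_dim s = card s - 1"

definition incidence :: "('v::linorder set \<Rightarrow> int) \<Rightarrow> 'v set \<Rightarrow> 'v set \<Rightarrow> real" where
  "incidence ori t s =
     (let w = the_elem (s - t) in
        real_of_int (ori s * ori t) * (-1) ^ card {u \<in> s. u < w})"

definition simplicial_complex :: "'v set set \<Rightarrow> bool" where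
  "simplicial_complex K \<longleftrightarrow> finite K \<and>
     (\<forall>s\<in>K. finite s \<and> s \<noteq> {}) \<and>
     (\<forall>s\<in>K. \<forall>t. t \<subseteq> s \<and> t \<noteq> {} \<longrightarrow> t \<in> K)"

definition manifold_like :: "'v set set \<Rightarrow> nat \<Rightarrow> bool" where
  "manifold_like K n \<longleftrightarrow> simplicial_complex K \<and>
     (\<forall>s\<in>K. card s \<le> n + 1) \<and>
     (\<forall>s\<in>K. \<exists>r\<in>K. card r = n + 1 \<and> s \<subseteq> r)"

definition orientation :: "'v set set \<Rightarrow> ('v set \<Rightarrow> int) \<Rightarrow> bool" where
  "orientation K ori \<longleftrightarrow> (\<forall>s\<in>K. ori s = 1 \<or> ori s = -1)"

definition coherently_oriented :: "'v::linorder set set \<Rightarrow> nat \<Rightarrow> ('v set \<Rightarrow> int) \<Rightarrow> bool" where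
  "coherently_oriented K n ori \<longleftrightarrow> orientation K ori \<and>
     (\<forall>s1\<in>K. \<forall>s2\<in>K. \<forall>t\<in>K. card s1 = n + 1 \<and> card s2 = n + 1 \<and> s1 \<noteq> s2 \<and>
        card t = n \<and> t \<subseteq> s1 \<and> t \<subseteq> s2 \<longrightarrow>
        incidence ori t s1 = - incidence ori t s2)"

definition well_centered :: "'v set set \<Rightarrow> ('v \<Rightarrow> 'a::euclidean_space) \<Rightarrow> bool" where
  "well_centered K pos \<longleftrightarrow>
     (\<forall>s\<in>K. inj_on pos s \<and> \<not> affine_dependent (pos ` s) \<and>
        (\<exists>c. c \<in> affine hull (pos ` s) \<and>
             (\<forall>v\<in>s. \<forall>w\<in>s. dist c (pos v) = dist c (pos w)) \<and>
             c \<in> rel_interior (convex hull (pos ` s))))"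

definition bdry :: "'v set set \<Rightarrow> nat \<Rightarrow> 'v set set" where
  "bdry K n = {t. \<exists>r\<in>K. card r = n \<and> card {s\<in>K. card s = n + 1 \<and> r \<subseteq> s} = 1 \<and>
                     t \<noteq> {} \<and> t \<subseteq> r}"

definition primal_d :: "'v::linorder set set \<Rightarrow> ('v set \<Rightarrow> int) \<Rightarrow> ('v set \<Rightarrow> real) \<Rightarrow> 'v set \<Rightarrow> real" where
  "primal_d K ori \<alpha> s = (\<Sum>t\<in>{t\<in>K. t \<subseteq> s \<and> card t + 1 = card s}. incidence ori t s * \<alpha> t)"

text \<open>Dual derivatives of a dual m-form (m \<le> n-1), j = n - m; the value at
the interior dual cell of a (j-1)-simplex t.\<close>
definition dual_d_i :: "'v::linorder set set \<Rightarrow> ('v set \<Rightarrow> int) \<Rightarrow> nat \<Rightarrow> nat \<Rightarrow> ('v set \<Rightarrow> real) \<Rightarrow> 'v set \<Rightarrow> real" where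
  "dual_d_i K ori n m \<beta> t = (-1) ^ (n - m) *
     (\<Sum>s\<in>{s\<in>K. t \<subseteq> s \<and> card s = n - m + 1}. incidence ori t s * \<beta> s)"

definition dual_d_b :: "'v set set \<Rightarrow> nat \<Rightarrow> nat \<Rightarrow> ('v set \<Rightarrow> real) \<Rightarrow> 'v set \<Rightarrow> real" where
  "dual_d_b K n m \<beta> t = (if t \<in> bdry K n then (-1) ^ (n - m - 1) * \<beta> t else 0)"

definition wedge_K :: "'v set set \<Rightarrow> nat \<Rightarrow> ('v set \<Rightarrow> real) \<Rightarrow> ('v set \<Rightarrow> real) \<Rightarrow> real" where
  "wedge_K K j \<alpha> \<beta> = (\<Sum>s\<in>{s\<in>K. card s = j + 1}. \<alpha> s * \<beta> s)"

definition wedge_bK :: "'v set set \<Rightarrow> nat \<Rightarrow> nat \<Rightarrow> ('v set \<Rightarrow> real) \<Rightarrow> ('v set \<Rightarrow> real) \<Rightarrow> real" where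
  "wedge_bK K n j \<alpha> \<gamma> = (\<Sum>t\<in>{t\<in>bdry K n. card t = j + 1}. \<alpha> t * \<gamma> t)"

definition restrict_bdry :: "'v set set \<Rightarrow> nat \<Rightarrow> ('v set \<Rightarrow> real) \<Rightarrow> 'v set \<Rightarrow> real" where
  "restrict_bdry K n \<alpha> t = (if t \<in> bdry K n then \<alpha> t else 0)"

end

theory Submission
  imports Defs
begin

text \<open>Both pairings are finite sums over simplices, so the identity is discrete summation by
parts: exchanging the order of summation in the pairing of d\<alpha> with \<beta>i shows that the interior
dual derivative is, up to the sign (-1)^k, the transpose of the primal one, and this cancels the
interior part of the second term. The boundary dual derivative only sees boundary simplices and
leaves exactly the boundary pairing. Neither coherence of the orientation nor the geometry
enters.\<close>

lemma bdry_subset: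
  assumes "simplicial_complex K"
  shows "bdry K n \<subseteq> K"
  using assms unfolding bdry_def simplicial_complex_def by blast

lemma wedge_K_add_right:
  "wedge_K K j \<alpha> (\<lambda>t. \<beta> t + \<gamma> t) = wedge_K K j \<alpha> \<beta> + wedge_K K j \<alpha> \<gamma>"
  unfolding wedge_K_def by (simp add: distrib_left sum.distrib)

lemma wedge_K_primal_d_eq_dual_d_i:
  assumes "finite K" and "m < n"
  shows "wedge_K K (n - m) (primal_d K ori \<alpha>) \<beta>
         = (-1) ^ (n - m) * wedge_K K (n - m - 1) \<alpha> (dual_d_i K ori n m \<beta>)"
proof -
  define j where "j = n - m"
  have j: "n - m = j" "n - m - 1 + 1 = j" using assms(2) by (auto simp: j_def)
  define A where "A = {s\<in>K. card s = j + 1}"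
  define B where "B = {t\<in>K. card t = j}"
  have "finite A" "finite B" using assms(1) by (auto simp: A_def B_def)
  define f where "f t s = incidence ori t s * \<alpha> t * \<beta> s" for t s
  have "wedge_K K j (primal_d K ori \<alpha>) \<beta> = (\<Sum>s\<in>A. \<Sum>t\<in>{t. t \<in> B \<and> t \<subseteq> s}. f t s)"
    unfolding wedge_K_def primal_d_def A_def[symmetric] sum_distrib_right
  proof (rule sum.cong[OF refl])
    fix s assume "s \<in> A"
    then have "{t\<in>K. t \<subseteq> s \<and> card t + 1 = card s} = {t. t \<in> B \<and> t \<subseteq> s}"
      by (auto simp: A_def B_def)
    then show "(\<Sum>t\<in>{t\<in>K. t \<subseteq> s \<and> card t + 1 = card s}. incidence ori t s * \<alpha> t * \<beta> s)
               = (\<Sum>t\<in>{t. t \<in> B \<and> t \<subseteq> s}. f t s)"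
      by (simp add: f_def)
  qed
  also have "\<dots> = (\<Sum>t\<in>B. \<Sum>s\<in>{s. s \<in> A \<and> t \<subseteq> s}. f t s)"
    by (rule sum.swap_restrict[OF \<open>finite A\<close> \<open>finite B\<close>])
  also have "\<dots> = (-1) ^ j * wedge_K K (n - m - 1) \<alpha> (dual_d_i K ori n m \<beta>)"
    unfolding wedge_K_def j(2) B_def[symmetric] sum_distrib_left
  proof (rule sum.cong[OF refl])
    fix t
    have "{s\<in>K. t \<subseteq> s \<and> card s = j + 1} = {s. s \<in> A \<and> t \<subseteq> s}" by (auto simp: A_def)
    moreover have "(-1::real) ^ j * (-1) ^ j = 1"
      by (simp add: power_mult_distrib[symmetric])
    ultimately show "(\<Sum>s\<in>{s. s \<in> A \<and> t \<subseteq> s}. f t s)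
                     = (-1) ^ j * (\<alpha> t * dual_d_i K ori n m \<beta> t)"
      unfolding dual_d_i_def j(1) f_def
      by (simp add: sum_distrib_left mult.assoc mult.left_commute)
  qed
  finally show ?thesis unfolding j(1) .
qed

lemma wedge_K_dual_d_b:
  assumes "simplicial_complex K"
  shows "wedge_K K j \<alpha> (dual_d_b K n m \<beta>)
         = (-1) ^ (n - m - 1) * wedge_bK K n j (restrict_bdry K n \<alpha>) \<beta>"
proof -
  have "finite K" using assms by (simp add: simplicial_complex_def)
  have "{t\<in>bdry K n. card t = j + 1} = {t\<in>{s\<in>K. card s = j + 1}. t \<in> bdry K n}"
    using bdry_subset[OF assms] by auto
  then have "wedge_bK K n j (restrict_bdry K n \<alpha>) \<beta>
             = (\<Sum>t\<in>{s\<in>K. card s = j + 1}. if t \<in> bdry K n then \<alpha> t * \<beta> t else 0)"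
    using \<open>finite K\<close> unfolding wedge_bK_def restrict_bdry_def
    by (auto simp: sum.inter_filter intro!: sum.cong)
  then show ?thesis
    unfolding wedge_K_def dual_d_b_def
    by (simp add: sum_distrib_left if_distrib mult.left_commute cong: if_cong)
qed

theorem proposition1:
  fixes K :: "'v::linorder set set" and n k :: nat
    and ori :: "'v set \<Rightarrow> int" and pos :: "'v \<Rightarrow> 'a::euclidean_space"
    and \<alpha> \<beta>i \<beta>b :: "'v set \<Rightarrow> real"
  assumes "manifold_like K n"
    and "coherently_oriented K n ori"
    and "well_centered K pos"
    and "1 \<le> k" and "k \<le> n"
  shows "wedge_K K k (primal_d K ori \<alpha>) \<beta>i
         + (-1) ^ (k - 1) * wedge_K K (k - 1) \<alpha>
             (\<lambda>t. dual_d_i K ori n (n - k) \<beta>i t + dual_d_b K n (n - k) \<beta>b t)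
         = wedge_bK K n (k - 1) (restrict_bdry K n \<alpha>) \<beta>b"
proof -
  have K: "simplicial_complex K" using assms(1) by (simp add: manifold_like_def)
  have nk: "n - (n - k) = k" "n - (n - k) - 1 = k - 1" using assms(4,5) by auto
  define W where "W = wedge_K K (k - 1) \<alpha> (dual_d_i K ori n (n - k) \<beta>i)"
  have interior: "wedge_K K k (primal_d K ori \<alpha>) \<beta>i = (-1) ^ k * W"
    using wedge_K_primal_d_eq_dual_d_i[of K "n - k" n ori \<alpha> \<beta>i] K assms(4,5)
    by (simp add: simplicial_complex_def nk W_def)
  have boundary: "wedge_K K (k - 1) \<alpha> (dual_d_b K n (n - k) \<beta>b)
                  = (-1) ^ (k - 1) * wedge_bK K n (k - 1) (restrict_bdry K n \<alpha>) \<beta>b"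
    using wedge_K_dual_d_b[OF K, of "k - 1" \<alpha> n "n - k" \<beta>b] by (simp only: nk)
  obtain j where k: "k = Suc j" using assms(4) by (cases k) auto
  show ?thesis
    unfolding wedge_K_add_right interior boundary W_def[symmetric]
    by (simp add: k algebra_simps flip: power_mult_distrib)
qed

end
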